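(* Let $R$ be a ring. The following are equivalent: (1) $R$ is an NCUC ring; (2) every strongly nil-clean element of $R$ is uniquely clean; (3) every idempotent of $R$ is uniquely clean; (4) $R$ is abelian; (5) $R$ is an NCUNC ring.
   Context: All rings are associative with identity $1$. For a ring $R$, $\mathrm{Id}(R)$, $U(R)$, $\mathrm{Nil}(R)$ denote the sets of idempotents, units and nilpotent elements. An element $a\in R$ is uniquely clean if there is exactly one $e\in \mathrm{Id}(R)$ with $a-e\in U(R)$. An element $a$ is nil-clean if $a=e+q$ with $e\in \mathrm{Id}(R)$, $q\in\mathrm{Nil}(R)$, strongly nil-clean if moreover $eq=qe$ can be arranged, and uniquely nil-clean if there is exactly one $e\in\mathrm{Id}(R)$ with $a-e\in\mathrm{Nil}(R)$. $R$ is NCUC if every nil-clean element of $R$ is uniquely clean, and NCUNC if every nil-clean element of $R$ is uniquely nil-clean. $R$ is abelian if all its idempotents are central. *)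

theory Defs
  imports Main
begin

definition idem :: "'a::ring_1 \<Rightarrow> bool" where
  "idem e \<longleftrightarrow> e * e = e"

definition unit_elem :: "'a::ring_1 \<Rightarrow> bool" where
  "unit_elem u \<longleftrightarrow> (\<exists>v. u * v = 1 \<and> v * u = 1)"

definition nilp :: "'a::ring_1 \<Rightarrow> bool" where
  "nilp q \<longleftrightarrow> (\<exists>n. q ^ n = 0)"

definition uniquely_clean :: "'a::ring_1 \<Rightarrow> bool" where
  "uniquely_clean a \<longleftrightarrow> (\<exists>!e. idem e \<and> unit_elem (a - e))"

definition nil_clean :: "'a::ring_1 \<Rightarrow> bool" where
  "nil_clean a \<longleftrightarrow> (\<exists>e q. idem e \<and> nilp q \<and> a = e + q)"

definition strongly_nil_clean :: "'a::ring_1 \<Rightarrow> bool" where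
  "strongly_nil_clean a \<longleftrightarrow> (\<exists>e q. idem e \<and> nilp q \<and> e * q = q * e \<and> a = e + q)"

definition uniquely_nil_clean :: "'a::ring_1 \<Rightarrow> bool" where
  "uniquely_nil_clean a \<longleftrightarrow> (\<exists>!e. idem e \<and> nilp (a - e))"

definition NCUC :: "'a::ring_1 itself \<Rightarrow> bool" where
  "NCUC _ \<longleftrightarrow> (\<forall>a::'a. nil_clean a \<longrightarrow> uniquely_clean a)"

definition NCUNC :: "'a::ring_1 itself \<Rightarrow> bool" where
  "NCUNC _ \<longleftrightarrow> (\<forall>a::'a. nil_clean a \<longrightarrow> uniquely_nil_clean a)"

definition abelian_ring :: "'a::ring_1 itself \<Rightarrow> bool" where
  "abelian_ring _ \<longleftrightarrow> (\<forall>e::'a. idem e \<longrightarrow> (\<forall>x. e * x = x * e))"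

end

theory Submission
  imports Defs
begin

text \<open>For an idempotent e the elements h = e x (1 - e) satisfy e h = h, h e = 0 and h^2 = 0,
so besides 1 - e also 1 - e + h is an idempotent making e clean, and e + h has the two
nil-clean decompositions e + h and (e + h) + 0. Uniqueness of clean (resp. nil-clean)
decompositions therefore kills every such h, which means that R is abelian.
Conversely, in an abelian ring an idempotent g with g u nilpotent for a unit u vanishes,
since g u^n = (g u)^n = 0. Applied to g = e f and (1 - e)(1 - f), resp. to e (1 - f), this
gives uniqueness; existence for a = e + q comes from a - (1 - e) = s (1 + s q) with
s = 2 e - 1, s^2 = 1.\<close>

lemma one_minus_mult_geometric_sum:
  "(1 - q) * (\<Sum>i<n. q ^ i) = (1::'a::ring_1) - q ^ n"
proof -
  have "(1 - q) * (\<Sum>i<n. q ^ i) = (\<Sum>i<n. q ^ i - q ^ Suc i)"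
    by (simp add: sum_distrib_left left_diff_distrib)
  then show ?thesis by (simp only: sum_lessThan_telescope' power_0)
qed

lemma geometric_sum_mult_one_minus:
  "(\<Sum>i<n. q ^ i) * (1 - q) = (1::'a::ring_1) - q ^ n"
proof -
  have "(\<Sum>i<n. q ^ i) * (1 - q) = (\<Sum>i<n. q ^ i - q ^ Suc i)"
    by (simp add: sum_distrib_right right_diff_distrib power_commutes sum_subtractf)
  then show ?thesis by (simp only: sum_lessThan_telescope' power_0)
qed

lemma nilp_0: "nilp (0::'a::ring_1)"
  unfolding nilp_def by (metis power_one_right)

lemma unit_elem_one_minus_nilp:
  fixes q :: "'a::ring_1"
  assumes "nilp q"
  shows "unit_elem (1 - q)"
proof -
  obtain n where "q ^ n = 0" using assms unfolding nilp_def by blast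
  then show ?thesis
    unfolding unit_elem_def
    using one_minus_mult_geometric_sum[of q n] geometric_sum_mult_one_minus[of q n] by auto
qed

lemma nilp_uminus: "nilp (q::'a::ring_1) \<Longrightarrow> nilp (- q)"
  unfolding nilp_def by (metis power_minus mult_zero_right)

lemma unit_elem_one_plus_nilp: "nilp (q::'a::ring_1) \<Longrightarrow> unit_elem (1 + q)"
  using unit_elem_one_minus_nilp[OF nilp_uminus] by simp

lemma unit_elem_mult:
  fixes u v :: "'a::ring_1"
  assumes "unit_elem u" "unit_elem v"
  shows "unit_elem (u * v)"
proof -
  obtain u' v' where "u * u' = 1" "u' * u = 1" "v * v' = 1" "v' * v = 1"
    using assms unfolding unit_elem_def by blast
  then have "(u * v) * (v' * u') = 1 \<and> (v' * u') * (u * v) = 1"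
    by (metis mult.assoc mult_1_left)
  then show ?thesis unfolding unit_elem_def by blast
qed

lemma unit_elem_power: "unit_elem (u::'a::ring_1) \<Longrightarrow> unit_elem (u ^ n)"
  unfolding unit_elem_def by (metis left_right_inverse_power)

lemma unit_elem_if_square_one: "(u::'a::ring_1) * u = 1 \<Longrightarrow> unit_elem u"
  unfolding unit_elem_def by blast

lemma power_mult_if_commute:
  fixes x y :: "'a::monoid_mult"
  assumes "x * y = y * x"
  shows "(x * y) ^ n = x ^ n * y ^ n"
proof (induction n)
  case (Suc n)
  have "(x * y) ^ Suc n = x * (y * x ^ n) * y ^ n"
    by (simp add: Suc mult.assoc)
  also have "\<dots> = x * x ^ n * (y * y ^ n)"
    by (simp only: power_commuting_commutes[OF assms, symmetric] mult.assoc)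
  also have "\<dots> = x ^ Suc n * y ^ Suc n"
    by simp
  finally show ?case .
qed simp

lemma nilp_mult_if_commute:
  fixes x q :: "'a::ring_1"
  assumes "x * q = q * x" "nilp q"
  shows "nilp (x * q)"
  using assms unfolding nilp_def by (metis power_mult_if_commute mult_zero_right)

lemma idem_power: "idem (e::'a::ring_1) \<Longrightarrow> e ^ Suc n = e"
  unfolding idem_def by (induction n) simp_all

lemma idem_eq_0_if_nilp_mult_unit:
  fixes g u :: "'a::ring_1"
  assumes g: "idem g" and commute: "g * u = u * g" and u: "unit_elem u"
    and nilp: "nilp (g * u)"
  shows "g = 0"
proof -
  obtain n where "(g * u) ^ n = 0" using nilp unfolding nilp_def by blast
  then have "(g * u) ^ Suc n = 0" by simp
  then have gu: "g * u ^ Suc n = 0"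
    by (simp only: power_mult_if_commute[OF commute] idem_power[OF g])
  obtain w where "u ^ Suc n * w = 1" using unit_elem_power[OF u] unfolding unit_elem_def by blast
  then have "g = g * u ^ Suc n * w" by (simp add: mult.assoc)
  with gu show ?thesis by simp
qed

lemma idem_one_minus: "idem (e::'a::ring_1) \<Longrightarrow> idem (1 - e)"
  by (simp add: idem_def algebra_simps)

lemma idem_mult_one_minus_eq_0:
  "idem (e::'a::ring_1) \<Longrightarrow> e * (1 - e) = 0"
  "idem (e::'a::ring_1) \<Longrightarrow> (1 - e) * e = 0"
  unfolding idem_def by (simp_all add: algebra_simps)

lemma idem_mult_if_commute:
  "idem (e::'a::ring_1) \<Longrightarrow> idem f \<Longrightarrow> e * f = f * e \<Longrightarrow> idem (e * f)"
  unfolding idem_def by (metis mult.assoc)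

lemma idem_mult_absorb:
  "idem (e::'a::ring_1) \<Longrightarrow> e * e = e"
  "idem (e::'a::ring_1) \<Longrightarrow> e * (e * z) = e * z"
  unfolding idem_def by (simp_all flip: mult.assoc)

lemma abelian_ringI:
  assumes "\<And>e x::'a::ring_1. idem e \<Longrightarrow> e * x * (1 - e) = 0"
  shows "abelian_ring TYPE('a)"
  unfolding abelian_ring_def
proof (intro allI impI)
  fix e x :: 'a
  assume e: "idem e"
  have "e * x * (1 - e) = 0" "(1 - e) * x * (1 - (1 - e)) = 0"
    using assms e idem_one_minus by blast+
  then have "e * x = e * x * e" "x * e = e * x * e"
    using e by (simp_all add: algebra_simps idem_mult_absorb)
  then show "e * x = x * e" by simp
qed

lemma idem_corner:
  fixes e x :: "'a::ring_1"
  assumes "idem e"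
  defines "h \<equiv> e * x * (1 - e)"
  shows "e * h = h" "h * e = 0" "h * h = 0"
  using assms by (simp_all add: algebra_simps idem_mult_absorb)

lemma abelian_ring_if_idem_uniquely_clean:
  assumes uc: "\<And>e::'a::ring_1. idem e \<Longrightarrow> uniquely_clean e"
  shows "abelian_ring TYPE('a)"
proof (rule abelian_ringI)
  fix e x :: 'a
  assume e: "idem e"
  define h where "h = e * x * (1 - e)"
  note h = idem_corner[OF e, of x, folded h_def]
  have "(e - (1 - e)) * (e - (1 - e)) = 1" "(e - (1 - e + h)) * (e - (1 - e + h)) = 1"
    using e h by (simp_all add: algebra_simps idem_mult_absorb)
  moreover have "idem (1 - e)" "idem (1 - e + h)"
    using e h by (simp_all add: idem_def algebra_simps idem_mult_absorb)
  ultimately have "1 - e + h = 1 - e"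
    using uc[OF e] unfolding uniquely_clean_def by (blast intro: unit_elem_if_square_one)
  then show "e * x * (1 - e) = 0" by (simp add: h_def)
qed

lemma abelian_ring_if_NCUNC:
  assumes "NCUNC TYPE('a::ring_1)"
  shows "abelian_ring TYPE('a)"
proof (rule abelian_ringI)
  fix e x :: 'a
  assume e: "idem e"
  define h where "h = e * x * (1 - e)"
  note h = idem_corner[OF e, of x, folded h_def]
  have nilp_h: "nilp h"
    unfolding nilp_def using h(3) by (metis power2_eq_square)
  have "idem (e + h)"
    using e h by (simp add: idem_def algebra_simps idem_mult_absorb)
  moreover have "nil_clean (e + h)"
    unfolding nil_clean_def using e nilp_h by blast
  then have "uniquely_nil_clean (e + h)"
    using assms unfolding NCUNC_def by blast
  ultimately have "e + h = e"
    using e nilp_h nilp_0 unfolding uniquely_nil_clean_def by fastforce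
  then show "e * x * (1 - e) = 0" by (simp add: h_def)
qed

lemma abelian_ring_commute: "abelian_ring TYPE('a::ring_1) \<Longrightarrow> idem (e::'a) \<Longrightarrow> e * x = x * e"
  unfolding abelian_ring_def by blast

lemma idem_eq_0_if_abelian_ring:
  fixes g u q :: "'a::ring_1"
  assumes ab: "abelian_ring TYPE('a)" and g: "idem g" and "unit_elem u" "nilp q"
    and "g * u = g * q"
  shows "g = 0"
proof (rule idem_eq_0_if_nilp_mult_unit[OF g])
  show "g * u = u * g" using abelian_ring_commute[OF ab g] .
  show "nilp (g * u)"
    using assms nilp_mult_if_commute abelian_ring_commute[OF ab g] by metis
qed fact

lemma unit_elem_nil_clean_complement:
  fixes a e :: "'a::ring_1"
  assumes ab: "abelian_ring TYPE('a)" and e: "idem e" and "nilp (a - e)"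
  shows "unit_elem (a - (1 - e))"
proof -
  define s where "s = e - (1 - e)"
  have ss: "s * s = 1" using e by (simp add: s_def algebra_simps idem_mult_absorb)
  have "e * a = a * e" using abelian_ring_commute[OF ab e] .
  then have "s * (a - e) = (a - e) * s"
    unfolding s_def by (simp add: algebra_simps)
  then have "unit_elem (1 + s * (a - e))"
    using assms unit_elem_one_plus_nilp nilp_mult_if_commute by blast
  then have "unit_elem (s * (1 + s * (a - e)))"
    using unit_elem_mult unit_elem_if_square_one[OF ss] by blast
  moreover have "s * (1 + s * (a - e)) = s + (a - e)"
    by (simp add: distrib_left ss flip: mult.assoc)
  also have "\<dots> = a - (1 - e)"
    by (simp add: s_def)
  ultimately show ?thesis by simp
qed

lemma clean_idem_eq_complement:
  fixes a e f :: "'a::ring_1"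
  assumes ab: "abelian_ring TYPE('a)" and e: "idem e" and f: "idem f"
    and "nilp (a - e)" "unit_elem (a - f)"
  shows "f = 1 - e"
proof -
  have fe: "f * e = e * f" using abelian_ring_commute[OF ab f] .
  have "e * f = 0"
  proof (rule idem_eq_0_if_abelian_ring[OF ab idem_mult_if_commute[OF e f fe[symmetric]]])
    have "e * f * f = e * f * e"
      using e f fe by (simp add: mult.assoc idem_mult_absorb flip: mult.assoc[of e f])
    then show "e * f * (a - f) = e * f * (a - e)" by (simp add: right_diff_distrib)
  qed fact+
  moreover have "(1 - e) * (1 - f) = 0"
  proof (rule idem_eq_0_if_abelian_ring[OF ab
        idem_mult_if_commute[OF idem_one_minus[OF e] idem_one_minus[OF f]]])
    show "(1 - e) * (1 - f) = (1 - f) * (1 - e)" using fe by (simp add: algebra_simps)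
    have "(1 - f) * e = e * (1 - f)" using fe by (simp add: algebra_simps)
    then have "(1 - e) * (1 - f) * f = (1 - e) * (1 - f) * e"
      using e f by (simp add: mult.assoc idem_mult_one_minus_eq_0 flip: mult.assoc[of "1 - e"])
    then show "(1 - e) * (1 - f) * (a - f) = (1 - e) * (1 - f) * (a - e)"
      by (simp only: right_diff_distrib)
  qed fact+
  ultimately show ?thesis by (simp add: algebra_simps)
qed

lemma nil_clean_idem_absorb:
  fixes a e f :: "'a::ring_1"
  assumes ab: "abelian_ring TYPE('a)" and e: "idem e" and f: "idem f"
    and "nilp (a - e)" "nilp (a - f)"
  shows "e * f = e"
proof -
  have commute: "e * (1 - f) = (1 - f) * e"
    using abelian_ring_commute[OF ab e] .
  have "e * (1 - f) = 0"
  proof (rule idem_eq_0_if_abelian_ring[OF ab idem_mult_if_commute[OF e idem_one_minus[OF f]]])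
    show "e * (1 - f) = (1 - f) * e" by fact
    show "unit_elem (1 + (a - e))" using assms unit_elem_one_plus_nilp by blast
    have "e * (1 - f) * e = e * (1 - f)" "e * (1 - f) * f = 0"
      using e f commute[symmetric]
      by (simp_all add: mult.assoc idem_mult_absorb idem_mult_one_minus_eq_0
          flip: mult.assoc[of e "1 - f"])
    then show "e * (1 - f) * (1 + (a - e)) = e * (1 - f) * (a - f)"
      by (simp add: distrib_left right_diff_distrib)
  qed fact
  then show ?thesis by (simp add: algebra_simps)
qed

lemma NCUC_if_abelian_ring:
  assumes ab: "abelian_ring TYPE('a::ring_1)"
  shows "NCUC TYPE('a)"
  unfolding NCUC_def uniquely_clean_def
proof (intro allI impI)
  fix a :: 'a
  assume "nil_clean a"
  then obtain e where e: "idem e" and nilp: "nilp (a - e)"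
    unfolding nil_clean_def by force
  show "\<exists>!f. idem f \<and> unit_elem (a - f)"
    using idem_one_minus[OF e] unit_elem_nil_clean_complement[OF ab e nilp]
      clean_idem_eq_complement[OF ab e _ nilp] by blast
qed

lemma NCUNC_if_abelian_ring:
  assumes ab: "abelian_ring TYPE('a::ring_1)"
  shows "NCUNC TYPE('a)"
  unfolding NCUNC_def uniquely_nil_clean_def
proof (intro allI impI)
  fix a :: 'a
  assume "nil_clean a"
  then obtain e where e: "idem e" and nilp: "nilp (a - e)"
    unfolding nil_clean_def by force
  show "\<exists>!f. idem f \<and> nilp (a - f)"
  proof (intro ex1I conjI)
    fix f
    assume "idem f \<and> nilp (a - f)"
    then have "e * f = e" "f * e = f" "e * f = f * e"
      using nil_clean_idem_absorb[OF ab] abelian_ring_commute[OF ab] e nilp by blast+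
    then show "f = e" by simp
  qed fact+
qed

lemma nil_clean_if_strongly_nil_clean: "strongly_nil_clean a \<Longrightarrow> nil_clean a"
  unfolding strongly_nil_clean_def nil_clean_def by blast

lemma strongly_nil_clean_if_idem: "idem (e::'a::ring_1) \<Longrightarrow> strongly_nil_clean e"
  unfolding strongly_nil_clean_def using nilp_0 by force

theorem theorem3p5:
  shows "(NCUC TYPE('a::ring_1) \<longleftrightarrow> (\<forall>a::'a. strongly_nil_clean a \<longrightarrow> uniquely_clean a))
       \<and> ((\<forall>a::'a. strongly_nil_clean a \<longrightarrow> uniquely_clean a) \<longleftrightarrow> (\<forall>e::'a. idem e \<longrightarrow> uniquely_clean e))
       \<and> ((\<forall>e::'a. idem e \<longrightarrow> uniquely_clean e) \<longleftrightarrow> abelian_ring TYPE('a))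
       \<and> (abelian_ring TYPE('a) \<longleftrightarrow> NCUNC TYPE('a))"
proof -
  have "NCUC TYPE('a) \<Longrightarrow> \<forall>a::'a. strongly_nil_clean a \<longrightarrow> uniquely_clean a"
    unfolding NCUC_def using nil_clean_if_strongly_nil_clean by blast
  moreover have "(\<forall>a::'a. strongly_nil_clean a \<longrightarrow> uniquely_clean a)
      \<Longrightarrow> \<forall>e::'a. idem e \<longrightarrow> uniquely_clean e"
    using strongly_nil_clean_if_idem by blast
  moreover have "(\<forall>e::'a. idem e \<longrightarrow> uniquely_clean e) \<Longrightarrow> abelian_ring TYPE('a)"
    using abelian_ring_if_idem_uniquely_clean by blast
  ultimately show ?thesis
    using NCUC_if_abelian_ring NCUNC_if_abelian_ring abelian_ring_if_NCUNC by blast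
qed

end
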